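(* Let $\mathfrak a$ be a Euclidean space of dimension $n$, $\Phi\subset\mathfrak a^*$ a (possibly non-reduced) root system with a chosen ordering, positive roots $\Phi^+$ and simple roots $\alpha_1,\dots,\alpha_n$; let $\omega_1,\dots,\omega_n\in\mathfrak a$ be defined by $\alpha_i(\omega_j)=\delta_{ij}$, let $\mathfrak a_+=\{\mathbf z\in\mathfrak a:\alpha_i(\mathbf z)\ge0\ \forall i\}$, and let $\rho=\sum_{\alpha\in\Phi^+}\alpha=\sum_{i=1}^nk_i\alpha_i$ (with $k_i>0$). Put $k=\min_{1\le i\le n}k_i/\|\omega_i\|$. Then there exist $C_1,C_2>0$ such that for all $z>0$, $$C_1\le\frac{\int_{\{\mathbf z\in\mathfrak a_+:\|\mathbf z\|\ge z\}}e^{-\rho(\mathbf z)}\,d\mathbf z}{e^{-kz}}\le C_2.$$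
   Context: $\|\cdot\|$ is the Euclidean norm on $\mathfrak a$ and $d\mathbf z$ is Lebesgue measure on $\mathfrak a$. *)

theory Defs
  imports "HOL-Analysis.Analysis"
begin

text \<open>We identify the dual space with the space itself via the inner product:
  a root \<alpha> acts on z as \<alpha> \<bullet> z.\<close>

definition root_system :: "'a::euclidean_space set \<Rightarrow> bool" where
  "root_system \<Phi> \<longleftrightarrow>
     finite \<Phi> \<and> 0 \<notin> \<Phi> \<and> span \<Phi> = UNIV \<and>
     (\<forall>\<alpha>\<in>\<Phi>. \<forall>\<beta>\<in>\<Phi>. \<beta> - (2 * (\<beta> \<bullet> \<alpha>) / (\<alpha> \<bullet> \<alpha>)) *\<^sub>R \<alpha> \<in> \<Phi>) \<and>
     (\<forall>\<alpha>\<in>\<Phi>. \<forall>\<beta>\<in>\<Phi>. 2 * (\<beta> \<bullet> \<alpha>) / (\<alpha> \<bullet> \<alpha>) \<in> \<int>)"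

text \<open>A base (set of simple roots) of \<Phi>, i.e. the datum of a chosen ordering:
  a basis of the space contained in \<Phi> such that every root is an integral
  combination of it with coefficients all \<ge> 0 or all \<le> 0.\<close>
definition root_base :: "'a::euclidean_space set \<Rightarrow> 'a set \<Rightarrow> bool" where
  "root_base \<Phi> \<Delta> \<longleftrightarrow>
     \<Delta> \<subseteq> \<Phi> \<and> independent \<Delta> \<and> span \<Delta> = UNIV \<and>
     (\<forall>\<beta>\<in>\<Phi>. \<exists>c::'a \<Rightarrow> int. \<beta> = (\<Sum>\<alpha>\<in>\<Delta>. of_int (c \<alpha>) *\<^sub>R \<alpha>) \<and>
                 ((\<forall>\<alpha>\<in>\<Delta>. c \<alpha> \<ge> 0) \<or> (\<forall>\<alpha>\<in>\<Delta>. c \<alpha> \<le> 0)))"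

definition positive_roots :: "'a::euclidean_space set \<Rightarrow> 'a set \<Rightarrow> 'a set" where
  "positive_roots \<Phi> \<Delta> =
     {\<beta>\<in>\<Phi>. \<exists>c::'a \<Rightarrow> real. \<beta> = (\<Sum>\<alpha>\<in>\<Delta>. c \<alpha> *\<^sub>R \<alpha>) \<and> (\<forall>\<alpha>\<in>\<Delta>. c \<alpha> \<ge> 0)}"

definition weyl_chamber :: "'a::euclidean_space set \<Rightarrow> 'a set" where
  "weyl_chamber \<Delta> = {z. \<forall>\<alpha>\<in>\<Delta>. \<alpha> \<bullet> z \<ge> 0}"

end

theory Submission
  imports Defs
begin

text \<open>
  A point of the chamber is \<open>x = (\<Sum>\<alpha>\<in>\<Delta>. t\<^sub>\<alpha> *\<^sub>R \<omega> \<alpha>)\<close> with \<open>t\<^sub>\<alpha> = \<alpha> \<bullet> x \<ge> 0\<close>,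
  so \<open>\<rho> \<bullet> x = (\<Sum>\<alpha>\<in>\<Delta>. kk \<alpha> * t\<^sub>\<alpha>) \<ge> k * (\<Sum>\<alpha>\<in>\<Delta>. t\<^sub>\<alpha> * norm (\<omega> \<alpha>))\<close>, with equality on
  the ray through the \<open>\<omega> \<alpha>\<close> at which \<open>k\<close> is attained.  For the lower bound, a fixed ball
  inside the chamber pushed out along that ray lies in the region \<open>norm x \<ge> z\<close>, and on it
  \<open>\<rho> \<bullet> x\<close> exceeds \<open>k * z\<close> by a bounded amount.

  For the upper bound, the \<open>\<omega> \<alpha>\<close> are pairwise at angles bounded away from \<open>0\<close>, so the
  triangle inequality improves to \<open>norm x \<le> P + (1 - c) * R\<close>, where \<open>P\<close> is the largest term
  \<open>t\<^sub>\<beta> * norm (\<omega> \<beta>)\<close> and \<open>R\<close> the sum of the others.  Hence if \<open>norm x \<ge> z\<close>, moving \<open>x\<close>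
  back by \<open>z\<close> along \<open>\<omega> \<beta>\<close> gives a point \<open>y\<close> with \<open>\<rho> \<bullet> x \<ge> k * z + k * c / 2 * norm y\<close>,
  and the tail integral is at most \<open>exp (- k * z)\<close> times \<open>card \<Delta>\<close> translates of the finite
  integral of \<open>exp (- k * c / 2 * norm y)\<close>.
\<close>

lemma pow_div_fact_le_exp:
  fixes y :: real
  assumes "0 \<le> y"
  shows "y ^ n / fact n \<le> exp y"
proof -
  have "(\<lambda>n. y ^ n /\<^sub>R fact n) sums exp y" by (rule exp_converges)
  hence "(\<Sum>i\<in>{n}. y ^ i /\<^sub>R fact i) \<le> exp y"
    using sum_le_suminf[of "\<lambda>n. y ^ n /\<^sub>R fact n" "{n}"] assms by (auto simp: sums_iff)
  thus ?thesis by (simp add: divide_inverse mult.commute)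
qed

lemma summable_exp_neg_mult_poly:
  fixes \<mu> :: real
  assumes "0 < \<mu>"
  shows "summable (\<lambda>m::nat. exp (- \<mu> * m) * (real m + 1) ^ N)"
proof (rule summable_comparison_test)
  define K where "K = fact N * (2 / \<mu>) ^ N * exp (\<mu> / 2)"
  show "summable (\<lambda>m::nat. K * exp (- (\<mu> / 2)) ^ m)"
    using assms by (intro summable_mult summable_geometric) auto
  show "\<exists>M. \<forall>m\<ge>M. norm (exp (- \<mu> * m) * (real m + 1) ^ N) \<le> K * exp (- (\<mu> / 2)) ^ m"
  proof (intro exI allI impI)
    fix m :: nat
    have "((\<mu> / 2) * (real m + 1)) ^ N / fact N \<le> exp ((\<mu> / 2) * (real m + 1))"
      using assms by (intro pow_div_fact_le_exp) auto
    hence "(\<mu> / 2) ^ N * (real m + 1) ^ N \<le> fact N * exp ((\<mu> / 2) * (real m + 1))"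
      by (simp only: power_mult_distrib divide_le_eq fact_gt_zero mult.commute)
    hence "(real m + 1) ^ N \<le> fact N * (2 / \<mu>) ^ N * exp ((\<mu> / 2) * (real m + 1))"
      using assms by (simp add: field_simps power_divide)
    hence "exp (- \<mu> * m) * (real m + 1) ^ N
        \<le> exp (- \<mu> * m) * (fact N * (2 / \<mu>) ^ N * exp ((\<mu> / 2) * (real m + 1)))"
      by (intro mult_left_mono) auto
    also have "\<dots> = K * exp (- (\<mu> / 2)) ^ m"
      by (simp add: K_def mult_exp_exp exp_of_nat_mult[symmetric] field_simps)
    finally show "norm (exp (- \<mu> * m) * (real m + 1) ^ N) \<le> K * exp (- (\<mu> / 2)) ^ m"
      by simp
  qed
qed

lemma nn_integral_exp_neg_norm_finite:
  fixes \<mu> :: real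
  assumes "0 < \<mu>"
  shows "(\<integral>\<^sup>+ x. ennreal (exp (- \<mu> * norm (x::'a::euclidean_space))) \<partial>lborel) < \<infinity>"
proof -
  let ?V = "unit_ball_vol (real DIM('a))"
  let ?f = "\<lambda>m::nat. exp (- \<mu> * m) * (?V * (real m + 1) ^ DIM('a))"
  have "(\<integral>\<^sup>+ x. ennreal (exp (- \<mu> * norm (x::'a))) \<partial>lborel)
      \<le> (\<integral>\<^sup>+ x. (\<Sum>m. ennreal (exp (- \<mu> * m)) * indicator (ball (0::'a) (real m + 1)) x) \<partial>lborel)"
  proof (rule nn_integral_mono)
    fix x :: 'a
    define m where "m = nat \<lfloor>norm x\<rfloor>"
    have "real m \<le> norm x" "norm x < real m + 1"
      by (simp_all add: m_def of_nat_nat)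
    hence "ennreal (exp (- \<mu> * norm x))
        \<le> (\<Sum>i\<in>{m}. ennreal (exp (- \<mu> * i)) * indicator (ball (0::'a) (real i + 1)) x)"
      using assms by auto
    also have "\<dots> \<le> (\<Sum>m. ennreal (exp (- \<mu> * m)) * indicator (ball (0::'a) (real m + 1)) x)"
      by (rule sum_le_suminf[OF summableI]) auto
    finally show "ennreal (exp (- \<mu> * norm x))
        \<le> (\<Sum>m. ennreal (exp (- \<mu> * m)) * indicator (ball (0::'a) (real m + 1)) x)" .
  qed
  also have "\<dots> = (\<Sum>m. \<integral>\<^sup>+ x. ennreal (exp (- \<mu> * m)) * indicator (ball (0::'a) (real m + 1)) x \<partial>lborel)"
    by (intro nn_integral_suminf borel_measurable_times_ennreal borel_measurable_indicator)
       (auto simp: borel_open)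
  also have "\<dots> = (\<Sum>m. ennreal (?f m))"
    by (subst nn_integral_cmult_indicator) (auto simp: emeasure_ball ennreal_mult)
  also have "\<dots> < \<infinity>"
  proof -
    have "summable ?f"
      using summable_mult[OF summable_exp_neg_mult_poly[OF assms, of "DIM('a)"], of ?V]
      by (simp add: mult_ac)
    thus ?thesis
      by (simp add: less_top[symmetric] ennreal_suminf_neq_top)
  qed
  finally show ?thesis .
qed

lemma nn_integral_lborel_translate:
  fixes g :: "'a::euclidean_space \<Rightarrow> ennreal"
  assumes "g \<in> borel_measurable borel"
  shows "(\<integral>\<^sup>+ x. g (x - w) \<partial>lborel) = (\<integral>\<^sup>+ x. g x \<partial>lborel)"
proof -
  have "(\<integral>\<^sup>+ x. g x \<partial>lborel) = (\<integral>\<^sup>+ x. g x \<partial>distr lborel borel ((+) (- w)))"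
    by (simp add: lborel_distr_plus)
  also have "\<dots> = (\<integral>\<^sup>+ x. g (x - w) \<partial>lborel)"
    using assms by (subst nn_integral_distr) auto
  finally show ?thesis ..
qed

lemma norm_sum_le_max_plus:
  fixes v :: "'i \<Rightarrow> 'a::real_inner"
  assumes "finite I" "j \<in> I" "\<And>i. i \<in> I \<Longrightarrow> norm (v i) \<le> norm (v j)"
    and "\<And>i i'. i \<in> I \<Longrightarrow> i' \<in> I \<Longrightarrow> i \<noteq> i' \<Longrightarrow> v i \<bullet> v i' \<le> \<gamma> * (norm (v i) * norm (v i'))"
    and "0 \<le> \<gamma>" "\<gamma> \<le> 1"
  shows "norm (\<Sum>i\<in>I. v i) \<le> norm (v j) + (1 - (1 - \<gamma>) / card I) * (\<Sum>i\<in>I - {j}. norm (v i))"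
proof -
  define n where "n = real (card I)"
  define c where "c = (1 - \<gamma>) / n"
  define P where "P = norm (v j)"
  define y where "y = (\<Sum>i\<in>I - {j}. v i)"
  define R where "R = (\<Sum>i\<in>I - {j}. norm (v i))"
  have n: "1 \<le> n" using assms(1,2) card_gt_0_iff[of I] by (auto simp: n_def)
  have c: "0 \<le> c" "c \<le> 1" "\<gamma> = 1 - c * n"
    using n assms(5,6) by (auto simp: c_def field_simps)
  have sum_eq: "(\<Sum>i\<in>I. v i) = v j + y"
    unfolding y_def using assms(1,2) by (rule sum.remove)
  have "0 \<le> R" by (simp add: R_def sum_nonneg)
  have "norm y \<le> R" unfolding y_def R_def by (rule norm_sum)
  have R_le: "R \<le> (n - 1) * P"
  proof -
    have "R \<le> real (card (I - {j})) * P"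
      unfolding R_def P_def by (rule sum_bounded_above) (use assms(3) in auto)
    thus ?thesis using assms(1,2) card_gt_0_iff[of I] by (auto simp: n_def of_nat_diff)
  qed
  have "v j \<bullet> y = (\<Sum>i\<in>I - {j}. v j \<bullet> v i)" by (simp add: y_def inner_sum_right)
  also have "\<dots> \<le> (\<Sum>i\<in>I - {j}. \<gamma> * (P * norm (v i)))"
    unfolding P_def using assms(2,4) by (intro sum_mono) auto
  also have "\<dots> = \<gamma> * P * R" by (simp add: R_def sum_distrib_left mult.assoc)
  finally have cross: "v j \<bullet> y \<le> \<gamma> * P * R" .
  have "(norm (v j + y))\<^sup>2 = P\<^sup>2 + 2 * (v j \<bullet> y) + (norm y)\<^sup>2"
    by (simp add: P_def power2_norm_eq_inner inner_add_left inner_add_right inner_commute)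
  also have "\<dots> \<le> P\<^sup>2 + 2 * \<gamma> * P * R + R\<^sup>2"
    using cross power_mono[OF \<open>norm y \<le> R\<close> norm_ge_zero, of 2] by simp
  also have "\<dots> \<le> (P + (1 - c) * R)\<^sup>2"
  proof -
    have "0 \<le> (n - 1) * P - R" using R_le by simp
    hence "0 \<le> c * (2 * (((n - 1) * P - R) * R) + c * R\<^sup>2)"
      using c(1) \<open>0 \<le> R\<close> by (intro mult_nonneg_nonneg add_nonneg_nonneg) auto
    moreover have "(P + (1 - c) * R)\<^sup>2
        = P\<^sup>2 + 2 * \<gamma> * P * R + R\<^sup>2 + c * (2 * (((n - 1) * P - R) * R) + c * R\<^sup>2)"
      unfolding c(3) by (simp add: power2_eq_square algebra_simps)
    ultimately show ?thesis by linarith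
  qed
  finally have "(norm (v j + y))\<^sup>2 \<le> (P + (1 - c) * R)\<^sup>2" .
  moreover have "0 \<le> P + (1 - c) * R"
    using c(2) \<open>0 \<le> R\<close> by (simp add: P_def)
  ultimately have "norm (v j + y) \<le> P + (1 - c) * R"
    by (rule power2_le_imp_le)
  thus ?thesis by (simp add: sum_eq P_def R_def c_def n_def)
qed

lemma obtain_uniform_inner_bound:
  fixes w :: "'i \<Rightarrow> 'a::real_inner"
  assumes "finite I"
    and "\<And>a b. a \<in> I \<Longrightarrow> b \<in> I \<Longrightarrow> a \<noteq> b \<Longrightarrow> w a \<bullet> w b < norm (w a) * norm (w b)"
  obtains \<gamma> where "0 \<le> \<gamma>" "\<gamma> < 1"
    "\<And>a b. a \<in> I \<Longrightarrow> b \<in> I \<Longrightarrow> a \<noteq> b \<Longrightarrow> w a \<bullet> w b \<le> \<gamma> * (norm (w a) * norm (w b))"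
proof
  define cosine where "cosine = (\<lambda>(a, b). w a \<bullet> w b / (norm (w a) * norm (w b)))"
  define pairs where "pairs = {(a, b) \<in> I \<times> I. a \<noteq> b}"
  have "finite pairs"
    by (rule finite_subset[of _ "I \<times> I"]) (use assms(1) in \<open>auto simp: pairs_def\<close>)
  hence fin: "finite (insert 0 (cosine ` pairs))" by simp
  have pos: "0 < norm (w a) * norm (w b)" if "(a, b) \<in> pairs" for a b
  proof -
    have "w a \<bullet> w b < norm (w a) * norm (w b)" using assms(2) that by (auto simp: pairs_def)
    hence "w a \<noteq> 0" "w b \<noteq> 0" by auto
    thus ?thesis by simp
  qed
  show "0 \<le> Max (insert 0 (cosine ` pairs))" using fin by simp
  have "cosine (a, b) < 1" if "(a, b) \<in> pairs" for a b
    using assms(2)[of a b] pos[OF that] that by (simp add: cosine_def pairs_def divide_less_eq)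
  thus "Max (insert 0 (cosine ` pairs)) < 1"
    using fin by (subst Max_less_iff) auto
  fix a b assume "a \<in> I" "b \<in> I" "a \<noteq> b"
  hence "(a, b) \<in> pairs" by (simp add: pairs_def)
  hence "cosine (a, b) \<le> Max (insert 0 (cosine ` pairs))" using fin by simp
  thus "w a \<bullet> w b \<le> Max (insert 0 (cosine ` pairs)) * (norm (w a) * norm (w b))"
    using pos[OF \<open>(a, b) \<in> pairs\<close>] by (simp add: cosine_def divide_le_eq)
qed

lemma weyl_chamber_add: "x \<in> weyl_chamber \<Delta> \<Longrightarrow> y \<in> weyl_chamber \<Delta> \<Longrightarrow> x + y \<in> weyl_chamber \<Delta>"
  by (simp add: weyl_chamber_def inner_add_right)

lemma weyl_chamber_scaleR: "0 \<le> a \<Longrightarrow> x \<in> weyl_chamber \<Delta> \<Longrightarrow> a *\<^sub>R x \<in> weyl_chamber \<Delta>"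
  by (simp add: weyl_chamber_def)

lemma closed_weyl_chamber: "closed (weyl_chamber \<Delta>)"
proof -
  have "weyl_chamber \<Delta> = (\<Inter>\<alpha>\<in>\<Delta>. {x. \<alpha> \<bullet> x \<ge> 0})" by (auto simp: weyl_chamber_def)
  thus ?thesis by (simp add: closed_INT closed_halfspace_ge)
qed

lemma ball_subset_weyl_chamber:
  assumes "finite \<Delta>" "\<And>\<alpha>. \<alpha> \<in> \<Delta> \<Longrightarrow> 0 < \<alpha> \<bullet> c"
  obtains r where "0 < r" "ball c r \<subseteq> weyl_chamber \<Delta>"
proof -
  have "open (\<Inter>\<alpha>\<in>\<Delta>. {x. \<alpha> \<bullet> x > 0})" using assms(1) by (auto simp: open_halfspace_gt)
  moreover have "c \<in> (\<Inter>\<alpha>\<in>\<Delta>. {x. \<alpha> \<bullet> x > 0})" using assms(2) by simp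
  ultimately obtain r where "0 < r" "ball c r \<subseteq> (\<Inter>\<alpha>\<in>\<Delta>. {x. \<alpha> \<bullet> x > 0})"
    by (rule openE)
  moreover have "(\<Inter>\<alpha>\<in>\<Delta>. {x. \<alpha> \<bullet> x > 0}) \<subseteq> weyl_chamber \<Delta>"
    by (auto simp: weyl_chamber_def less_imp_le)
  ultimately show ?thesis using that by (meson order_trans)
qed

lemma weyl_chamber_tail_in_borel [measurable]: "{x \<in> weyl_chamber \<Delta>. z \<le> norm x} \<in> sets borel"
proof (rule borel_closed)
  have "closed {x::'a. z \<le> norm x}" by (intro closed_Collect_le continuous_intros)
  hence "closed (weyl_chamber \<Delta> \<inter> {x. z \<le> norm x})" by (intro closed_Int closed_weyl_chamber)
  thus "closed {x \<in> weyl_chamber \<Delta>. z \<le> norm x}" by (simp add: Collect_conj_eq)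
qed

locale dual_basis =
  fixes \<Delta> :: "'a::euclidean_space set" and \<omega> :: "'a \<Rightarrow> 'a"
  assumes finite_basis [simp]: "finite \<Delta>"
    and span_basis: "span \<Delta> = UNIV"
    and inner_dual: "\<And>\<alpha> \<beta>. \<alpha> \<in> \<Delta> \<Longrightarrow> \<beta> \<in> \<Delta> \<Longrightarrow> \<alpha> \<bullet> \<omega> \<beta> = (if \<alpha> = \<beta> then 1 else 0)"
begin

lemma inner_sum_dual: "\<alpha> \<in> \<Delta> \<Longrightarrow> \<alpha> \<bullet> (\<Sum>\<beta>\<in>\<Delta>. c \<beta> *\<^sub>R \<omega> \<beta>) = c \<alpha>"
  by (simp add: inner_sum_right inner_dual if_distrib cong: if_cong)

lemma sum_inner_dual: "\<beta> \<in> \<Delta> \<Longrightarrow> (\<Sum>\<alpha>\<in>\<Delta>. c \<alpha> *\<^sub>R \<alpha>) \<bullet> \<omega> \<beta> = c \<beta>"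
  by (simp add: inner_sum_left inner_dual if_distrib cong: if_cong)

lemma dual_expansion: "x = (\<Sum>\<alpha>\<in>\<Delta>. (\<alpha> \<bullet> x) *\<^sub>R \<omega> \<alpha>)"
proof -
  define y where "y = x - (\<Sum>\<alpha>\<in>\<Delta>. (\<alpha> \<bullet> x) *\<^sub>R \<omega> \<alpha>)"
  have "\<alpha> \<bullet> y = 0" if "\<alpha> \<in> \<Delta>" for \<alpha>
    using that by (simp add: y_def inner_diff_right inner_sum_dual)
  hence "orthogonal y y"
    using orthogonal_to_span[of y \<Delta> y] span_basis by (auto simp: orthogonal_def inner_commute)
  thus ?thesis by (simp add: y_def orthogonal_def)
qed

lemma dual_nonzero: "\<alpha> \<in> \<Delta> \<Longrightarrow> \<omega> \<alpha> \<noteq> 0"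
  using inner_dual[of \<alpha> \<alpha>] by auto

lemma basis_nonempty: "\<Delta> \<noteq> {}"
proof
  assume "\<Delta> = {}"
  hence "(UNIV :: 'a set) = {0}" using span_basis by simp
  moreover obtain b :: 'a where "b \<in> Basis" using nonempty_Basis by blast
  ultimately show False using nonzero_Basis by auto
qed

lemma norm_le_sum_coords: "norm x \<le> (\<Sum>\<alpha>\<in>\<Delta>. \<bar>\<alpha> \<bullet> x\<bar> * norm (\<omega> \<alpha>))"
proof -
  have "norm x = norm (\<Sum>\<alpha>\<in>\<Delta>. (\<alpha> \<bullet> x) *\<^sub>R \<omega> \<alpha>)"
    by (rule arg_cong[where f = norm, OF dual_expansion])
  also have "\<dots> \<le> (\<Sum>\<alpha>\<in>\<Delta>. norm ((\<alpha> \<bullet> x) *\<^sub>R \<omega> \<alpha>))" by (rule norm_sum)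
  finally show ?thesis by simp
qed

lemma dual_inner_less:
  assumes "a \<in> \<Delta>" "b \<in> \<Delta>" "a \<noteq> b"
  shows "\<omega> a \<bullet> \<omega> b < norm (\<omega> a) * norm (\<omega> b)"
proof -
  have "\<omega> a \<bullet> \<omega> b \<noteq> norm (\<omega> a) * norm (\<omega> b)"
  proof
    assume "\<omega> a \<bullet> \<omega> b = norm (\<omega> a) * norm (\<omega> b)"
    hence "norm (\<omega> a) *\<^sub>R \<omega> b = norm (\<omega> b) *\<^sub>R \<omega> a" by (simp add: norm_cauchy_schwarz_eq)
    hence "a \<bullet> (norm (\<omega> a) *\<^sub>R \<omega> b) = a \<bullet> (norm (\<omega> b) *\<^sub>R \<omega> a)" by simp
    with assms dual_nonzero[of b] show False by (simp add: inner_dual)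
  qed
  with norm_cauchy_schwarz[of "\<omega> a" "\<omega> b"] show ?thesis by simp
qed

definition weighted_coord :: "'a \<Rightarrow> 'a \<Rightarrow> real" where
  "weighted_coord \<alpha> x = (\<alpha> \<bullet> x) * norm (\<omega> \<alpha>)"

definition weighted_coord_sum :: "'a \<Rightarrow> real" where
  "weighted_coord_sum x = (\<Sum>\<alpha>\<in>\<Delta>. weighted_coord \<alpha> x)"

lemma weighted_coord_nonneg: "x \<in> weyl_chamber \<Delta> \<Longrightarrow> \<alpha> \<in> \<Delta> \<Longrightarrow> 0 \<le> weighted_coord \<alpha> x"
  by (simp add: weighted_coord_def weyl_chamber_def)

lemma weighted_coord_sum_remove:
  "\<beta> \<in> \<Delta> \<Longrightarrow> weighted_coord_sum x = weighted_coord \<beta> x + (\<Sum>\<alpha>\<in>\<Delta> - {\<beta>}. weighted_coord \<alpha> x)"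
  unfolding weighted_coord_sum_def by (rule sum.remove) simp

lemma chamber_norm_le_max_plus:
  obtains c where "0 < c" "c \<le> 1"
    "\<And>x. x \<in> weyl_chamber \<Delta> \<Longrightarrow> \<exists>\<beta>\<in>\<Delta>.
       norm x \<le> weighted_coord \<beta> x + (1 - c) * (weighted_coord_sum x - weighted_coord \<beta> x)"
proof -
  obtain \<gamma> where \<gamma>: "0 \<le> \<gamma>" "\<gamma> < 1"
    and cos_le: "\<And>a b. a \<in> \<Delta> \<Longrightarrow> b \<in> \<Delta> \<Longrightarrow> a \<noteq> b \<Longrightarrow> \<omega> a \<bullet> \<omega> b \<le> \<gamma> * (norm (\<omega> a) * norm (\<omega> b))"
    using obtain_uniform_inner_bound[of \<Delta> \<omega>, OF finite_basis dual_inner_less] by blast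
  define c where "c = (1 - \<gamma>) / card \<Delta>"
  have card: "1 \<le> real (card \<Delta>)" using basis_nonempty card_gt_0_iff[of \<Delta>] by auto
  have "0 < c" "c \<le> 1" using \<gamma> card by (auto simp: c_def field_simps)
  moreover have "\<exists>\<beta>\<in>\<Delta>. norm x \<le> weighted_coord \<beta> x + (1 - c) * (weighted_coord_sum x - weighted_coord \<beta> x)"
    if x: "x \<in> weyl_chamber \<Delta>" for x
  proof -
    define v where "v \<alpha> = (\<alpha> \<bullet> x) *\<^sub>R \<omega> \<alpha>" for \<alpha>
    have norm_v: "norm (v \<alpha>) = weighted_coord \<alpha> x" if "\<alpha> \<in> \<Delta>" for \<alpha>
      using x that by (simp add: v_def weighted_coord_def weyl_chamber_def)
    have "Max ((\<lambda>\<alpha>. norm (v \<alpha>)) ` \<Delta>) \<in> (\<lambda>\<alpha>. norm (v \<alpha>)) ` \<Delta>"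
      using basis_nonempty by (intro Max_in) auto
    then obtain \<beta> where \<beta>: "\<beta> \<in> \<Delta>" "norm (v \<beta>) = Max ((\<lambda>\<alpha>. norm (v \<alpha>)) ` \<Delta>)"
      by (metis imageE)
    have max: "norm (v \<alpha>) \<le> norm (v \<beta>)" if "\<alpha> \<in> \<Delta>" for \<alpha>
      using \<beta>(2) that by simp
    have "v a \<bullet> v b \<le> \<gamma> * (norm (v a) * norm (v b))" if "a \<in> \<Delta>" "b \<in> \<Delta>" "a \<noteq> b" for a b
    proof -
      have "0 \<le> (a \<bullet> x) * (b \<bullet> x)" using x that by (simp add: weyl_chamber_def)
      with cos_le[OF that] have "((a \<bullet> x) * (b \<bullet> x)) * (\<omega> a \<bullet> \<omega> b)
          \<le> ((a \<bullet> x) * (b \<bullet> x)) * (\<gamma> * (norm (\<omega> a) * norm (\<omega> b)))"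
        by (rule mult_left_mono)
      thus ?thesis
        unfolding norm_v[OF that(1)] norm_v[OF that(2)] by (simp add: v_def weighted_coord_def mult_ac)
    qed
    from norm_sum_le_max_plus[of \<Delta> \<beta> v, OF finite_basis \<beta>(1) max this \<gamma>(1) less_imp_le[OF \<gamma>(2)]]
    have "norm (\<Sum>\<alpha>\<in>\<Delta>. v \<alpha>) \<le> norm (v \<beta>) + (1 - c) * (\<Sum>\<alpha>\<in>\<Delta> - {\<beta>}. norm (v \<alpha>))"
      by (simp add: c_def)
    moreover have "(\<Sum>\<alpha>\<in>\<Delta>. v \<alpha>) = x" unfolding v_def by (rule dual_expansion[symmetric])
    moreover have "(\<Sum>\<alpha>\<in>\<Delta> - {\<beta>}. norm (v \<alpha>)) = weighted_coord_sum x - weighted_coord \<beta> x"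
      using weighted_coord_sum_remove[OF \<beta>(1)] by (simp add: norm_v)
    ultimately show ?thesis using \<beta>(1) norm_v[OF \<beta>(1)] by auto
  qed
  ultimately show ?thesis using that by blast
qed

lemma one_le_inner_sum_positive_roots:
  assumes "finite \<Phi>" "\<Delta> \<subseteq> \<Phi>" "\<alpha> \<in> \<Delta>"
  shows "1 \<le> (\<Sum>\<beta>\<in>positive_roots \<Phi> \<Delta>. \<beta>) \<bullet> \<omega> \<alpha>"
proof -
  have "0 \<le> \<beta> \<bullet> \<omega> \<alpha>" if \<beta>: "\<beta> \<in> positive_roots \<Phi> \<Delta>" for \<beta>
  proof -
    obtain c where "\<beta> = (\<Sum>\<gamma>\<in>\<Delta>. c \<gamma> *\<^sub>R \<gamma>)" "\<forall>\<gamma>\<in>\<Delta>. 0 \<le> c \<gamma>"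
      using \<beta> by (auto simp: positive_roots_def)
    thus ?thesis using assms(3) by (simp add: sum_inner_dual)
  qed
  moreover have "\<alpha> \<in> positive_roots \<Phi> \<Delta>"
  proof -
    have "(\<Sum>\<gamma>\<in>\<Delta>. (if \<gamma> = \<alpha> then 1 else 0) *\<^sub>R \<gamma>) = (\<Sum>\<gamma>\<in>\<Delta>. if \<gamma> = \<alpha> then \<alpha> else 0)"
      by (intro sum.cong) auto
    also have "\<dots> = \<alpha>" using assms(3) by simp
    finally have "(\<Sum>\<gamma>\<in>\<Delta>. (if \<gamma> = \<alpha> then 1 else 0) *\<^sub>R \<gamma>) = \<alpha>" .
    thus ?thesis using assms(2,3) unfolding positive_roots_def
      by (intro CollectI conjI exI[of _ "\<lambda>\<gamma>. if \<gamma> = \<alpha> then 1 else 0"]) auto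
  qed
  moreover have "finite (positive_roots \<Phi> \<Delta>)" using assms(1) by (simp add: positive_roots_def)
  ultimately have "\<alpha> \<bullet> \<omega> \<alpha> \<le> (\<Sum>\<beta>\<in>positive_roots \<Phi> \<Delta>. \<beta> \<bullet> \<omega> \<alpha>)"
    by (intro member_le_sum) auto
  thus ?thesis using assms(3) by (simp add: inner_dual inner_sum_left)
qed

end

lemma scaled_abs_diff_add_le:
  fixes P R z c :: real
  assumes "0 \<le> R" "0 \<le> c" "c \<le> 2" "z \<le> P + (1 - c) * R"
  shows "c / 2 * (\<bar>P - z\<bar> + R) \<le> P + R - z"
proof (cases "z \<le> P")
  case True
  have "c / 2 * (P - z + R) \<le> 1 * (P - z + R)"
    using True assms by (intro mult_right_mono) auto
  thus ?thesis using True by simp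
next
  case False
  have "c * (z - P) \<le> c * ((1 - c) * R)" using assms by (intro mult_left_mono) auto
  hence "c * z - c * P \<le> c * R - c * c * R" by (simp add: algebra_simps)
  moreover have "0 \<le> c * c * R" using assms by simp
  moreover have "c / 2 * (\<bar>P - z\<bar> + R) = (c * z - c * P) / 2 + c * R / 2"
    using False by (simp add: field_simps)
  ultimately show ?thesis using assms(4) by (simp add: algebra_simps)
qed

locale weyl_integral = dual_basis +
  fixes kk :: "'a \<Rightarrow> real" and \<rho> :: 'a and k :: real
  assumes rho_eq: "\<rho> = (\<Sum>\<alpha>\<in>\<Delta>. kk \<alpha> *\<^sub>R \<alpha>)"
    and kk_pos: "\<And>\<alpha>. \<alpha> \<in> \<Delta> \<Longrightarrow> 0 < kk \<alpha>"
    and k_eq: "k = Min ((\<lambda>\<alpha>. kk \<alpha> / norm (\<omega> \<alpha>)) ` \<Delta>)"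
begin

lemma k_pos: "0 < k"
  using basis_nonempty kk_pos dual_nonzero by (simp add: k_eq)

lemma k_le:
  assumes "\<alpha> \<in> \<Delta>"
  shows "k * norm (\<omega> \<alpha>) \<le> kk \<alpha>"
proof -
  have "k \<le> kk \<alpha> / norm (\<omega> \<alpha>)" unfolding k_eq using assms by (intro Min_le) auto
  thus ?thesis using dual_nonzero[OF assms] by (simp add: le_divide_eq)
qed

lemma k_weighted_coord_sum_le_rho:
  assumes "x \<in> weyl_chamber \<Delta>"
  shows "k * weighted_coord_sum x \<le> \<rho> \<bullet> x"
proof -
  have "k * weighted_coord_sum x = (\<Sum>\<alpha>\<in>\<Delta>. (k * norm (\<omega> \<alpha>)) * (\<alpha> \<bullet> x))"
    by (simp add: weighted_coord_sum_def weighted_coord_def sum_distrib_left mult_ac)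
  also have "\<dots> \<le> (\<Sum>\<alpha>\<in>\<Delta>. kk \<alpha> * (\<alpha> \<bullet> x))"
    using assms k_le by (intro sum_mono mult_right_mono) (auto simp: weyl_chamber_def)
  also have "\<dots> = \<rho> \<bullet> x" by (simp add: rho_eq inner_sum_left)
  finally show ?thesis .
qed

lemma obtain_rho_direction:
  obtains u where "u \<in> weyl_chamber \<Delta>" "norm u = 1" "\<rho> \<bullet> u = k"
proof -
  have "k \<in> (\<lambda>\<alpha>. kk \<alpha> / norm (\<omega> \<alpha>)) ` \<Delta>"
    unfolding k_eq using basis_nonempty by (intro Min_in) auto
  then obtain \<alpha>\<^sub>0 where \<alpha>\<^sub>0: "\<alpha>\<^sub>0 \<in> \<Delta>" "k = kk \<alpha>\<^sub>0 / norm (\<omega> \<alpha>\<^sub>0)" by blast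
  define u where "u = (1 / norm (\<omega> \<alpha>\<^sub>0)) *\<^sub>R \<omega> \<alpha>\<^sub>0"
  show ?thesis
  proof
    show "u \<in> weyl_chamber \<Delta>" using \<alpha>\<^sub>0(1) by (simp add: u_def weyl_chamber_def inner_dual)
    show "norm u = 1" using dual_nonzero[OF \<alpha>\<^sub>0(1)] by (simp add: u_def)
    show "\<rho> \<bullet> u = k" using \<alpha>\<^sub>0 by (simp add: u_def rho_eq sum_inner_dual)
  qed
qed

lemma exp_neg_rho_le_shifted:
  assumes "0 \<le> c" "c \<le> 1" "x \<in> weyl_chamber \<Delta>" "\<beta> \<in> \<Delta>"
    and "norm x \<le> weighted_coord \<beta> x + (1 - c) * (weighted_coord_sum x - weighted_coord \<beta> x)"
    and "z \<le> norm x"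
  shows "exp (- (\<rho> \<bullet> x)) \<le> exp (- k * z) * exp (- (k * c / 2) * norm (x - (z / norm (\<omega> \<beta>)) *\<^sub>R \<omega> \<beta>))"
proof -
  define P where "P = weighted_coord \<beta> x"
  define R where "R = weighted_coord_sum x - P"
  define y where "y = x - (z / norm (\<omega> \<beta>)) *\<^sub>R \<omega> \<beta>"
  have R_eq: "R = (\<Sum>\<alpha>\<in>\<Delta> - {\<beta>}. weighted_coord \<alpha> x)"
    using weighted_coord_sum_remove[OF assms(4)] by (simp add: R_def P_def)
  have "0 \<le> R" unfolding R_eq using assms(3) by (auto intro: sum_nonneg weighted_coord_nonneg)
  have "norm y \<le> (\<Sum>\<alpha>\<in>\<Delta>. \<bar>\<alpha> \<bullet> y\<bar> * norm (\<omega> \<alpha>))" by (rule norm_le_sum_coords)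
  also have "\<dots> = \<bar>\<beta> \<bullet> y\<bar> * norm (\<omega> \<beta>) + (\<Sum>\<alpha>\<in>\<Delta> - {\<beta>}. \<bar>\<alpha> \<bullet> y\<bar> * norm (\<omega> \<alpha>))"
    using assms(4) by (rule sum.remove[OF finite_basis])
  also have "\<bar>\<beta> \<bullet> y\<bar> * norm (\<omega> \<beta>) = \<bar>(\<beta> \<bullet> y) * norm (\<omega> \<beta>)\<bar>" by (simp add: abs_mult)
  also have "(\<beta> \<bullet> y) * norm (\<omega> \<beta>) = P - z"
    using assms(4) dual_nonzero[OF assms(4)]
    by (simp add: y_def P_def weighted_coord_def inner_diff_right inner_dual left_diff_distrib)
  also have "(\<Sum>\<alpha>\<in>\<Delta> - {\<beta>}. \<bar>\<alpha> \<bullet> y\<bar> * norm (\<omega> \<alpha>)) = R"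
    unfolding R_eq using assms(3,4)
    by (intro sum.cong) (auto simp: y_def weighted_coord_def inner_diff_right inner_dual weyl_chamber_def)
  finally have ny: "norm y \<le> \<bar>P - z\<bar> + R" .
  have "c / 2 * norm y \<le> c / 2 * (\<bar>P - z\<bar> + R)"
    using ny assms(1) by (intro mult_left_mono) auto
  also have "\<dots> \<le> P + R - z"
    using assms(1,2,5,6) \<open>0 \<le> R\<close> by (intro scaled_abs_diff_add_le) (auto simp: P_def R_def)
  finally have "k * (c / 2 * norm y) \<le> k * (P + R - z)"
    using k_pos by (intro mult_left_mono) auto
  moreover have "k * (P + R) \<le> \<rho> \<bullet> x"
    using k_weighted_coord_sum_le_rho[OF assms(3)] by (simp add: R_def)
  ultimately have "- (\<rho> \<bullet> x) \<le> - k * z + - (k * c / 2) * norm y"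
    by (simp add: algebra_simps)
  thus ?thesis by (simp add: y_def flip: exp_add)
qed

lemma nn_integral_tail_le:
  obtains C where "0 < C" "\<And>z. (\<integral>\<^sup>+ x. ennreal (indicator {x \<in> weyl_chamber \<Delta>. z \<le> norm x} x *\<^sub>R exp (- (\<rho> \<bullet> x))) \<partial>lborel)
    \<le> ennreal (C * exp (- k * z))"
proof -
  obtain c where c: "0 < c" "c \<le> 1" and max_plus: "\<And>x. x \<in> weyl_chamber \<Delta> \<Longrightarrow> \<exists>\<beta>\<in>\<Delta>.
       norm x \<le> weighted_coord \<beta> x + (1 - c) * (weighted_coord_sum x - weighted_coord \<beta> x)"
    using chamber_norm_le_max_plus by blast
  define \<mu> where "\<mu> = k * c / 2"
  have "0 < \<mu>" using k_pos c by (simp add: \<mu>_def)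
  hence "(\<integral>\<^sup>+ x. ennreal (exp (- \<mu> * norm (x::'a))) \<partial>lborel) < \<infinity>"
    by (rule nn_integral_exp_neg_norm_finite)
  then obtain Q where "0 \<le> Q" and Q: "(\<integral>\<^sup>+ x. ennreal (exp (- \<mu> * norm (x::'a))) \<partial>lborel) = ennreal Q"
    by (auto simp: less_top_ennreal)
  define C where "C = real (card \<Delta>) * Q + 1"
  show ?thesis
  proof
    show "0 < C" using \<open>0 \<le> Q\<close> by (simp add: C_def add_nonneg_pos)
    fix z :: real
    define A where "A = {x \<in> weyl_chamber \<Delta>. z \<le> norm x}"
    define shift where "shift \<beta> = (z / norm (\<omega> \<beta>)) *\<^sub>R \<omega> \<beta>" for \<beta>
    have "(\<integral>\<^sup>+ x. ennreal (indicator A x *\<^sub>R exp (- (\<rho> \<bullet> x))) \<partial>lborel)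
        \<le> (\<integral>\<^sup>+ x. (\<Sum>\<beta>\<in>\<Delta>. ennreal (exp (- k * z)) * ennreal (exp (- \<mu> * norm (x - shift \<beta>)))) \<partial>lborel)"
    proof (rule nn_integral_mono)
      fix x
      show "ennreal (indicator A x *\<^sub>R exp (- (\<rho> \<bullet> x)))
          \<le> (\<Sum>\<beta>\<in>\<Delta>. ennreal (exp (- k * z)) * ennreal (exp (- \<mu> * norm (x - shift \<beta>))))"
      proof (cases "x \<in> A")
        case True
        then obtain \<beta> where "\<beta> \<in> \<Delta>"
          and "norm x \<le> weighted_coord \<beta> x + (1 - c) * (weighted_coord_sum x - weighted_coord \<beta> x)"
          using max_plus by (auto simp: A_def)
        with True c have "exp (- (\<rho> \<bullet> x)) \<le> exp (- k * z) * exp (- \<mu> * norm (x - shift \<beta>))"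
          unfolding \<mu>_def shift_def A_def by (intro exp_neg_rho_le_shifted) auto
        hence "ennreal (indicator A x *\<^sub>R exp (- (\<rho> \<bullet> x)))
            \<le> ennreal (exp (- k * z)) * ennreal (exp (- \<mu> * norm (x - shift \<beta>)))"
          using True by (simp add: ennreal_mult'[symmetric])
        also have "\<dots> \<le> (\<Sum>\<beta>\<in>\<Delta>. ennreal (exp (- k * z)) * ennreal (exp (- \<mu> * norm (x - shift \<beta>))))"
          using \<open>\<beta> \<in> \<Delta>\<close> by (intro member_le_sum) auto
        finally show ?thesis .
      qed simp
    qed
    also have "\<dots> = (\<Sum>\<beta>\<in>\<Delta>. \<integral>\<^sup>+ x. ennreal (exp (- k * z)) * ennreal (exp (- \<mu> * norm (x - shift \<beta>))) \<partial>lborel)"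
      by (rule nn_integral_sum) measurable
    also have "\<dots> = (\<Sum>\<beta>\<in>\<Delta>. ennreal (exp (- k * z)) * (\<integral>\<^sup>+ x. ennreal (exp (- \<mu> * norm (x - shift \<beta>))) \<partial>lborel))"
      by (intro sum.cong refl nn_integral_cmult) measurable
    also have "\<dots> = (\<Sum>\<beta>\<in>\<Delta>. ennreal (exp (- k * z)) * ennreal Q)"
      using Q by (subst nn_integral_lborel_translate) simp_all
    also have "\<dots> = of_nat (card \<Delta>) * ennreal (Q * exp (- k * z))"
      using \<open>0 \<le> Q\<close> by (simp add: ennreal_mult'[symmetric] mult.commute)
    also have "\<dots> = ennreal (real (card \<Delta>) * Q * exp (- k * z))"
      by (simp add: ennreal_of_nat_eq_real_of_nat ennreal_mult'[symmetric] mult.assoc)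
    also have "\<dots> \<le> ennreal (C * exp (- k * z))"
      by (intro ennreal_leI mult_right_mono) (auto simp: C_def)
    finally show "(\<integral>\<^sup>+ x. ennreal (indicator {x \<in> weyl_chamber \<Delta>. z \<le> norm x} x *\<^sub>R exp (- (\<rho> \<bullet> x))) \<partial>lborel)
        \<le> ennreal (C * exp (- k * z))" by (simp add: A_def)
  qed
qed

lemma nn_integral_tail_ge:
  obtains C where "0 < C" "\<And>z. 0 \<le> z \<Longrightarrow> ennreal (C * exp (- k * z))
    \<le> (\<integral>\<^sup>+ x. ennreal (indicator {x \<in> weyl_chamber \<Delta>. z \<le> norm x} x *\<^sub>R exp (- (\<rho> \<bullet> x))) \<partial>lborel)"
proof -
  obtain u where u: "u \<in> weyl_chamber \<Delta>" "norm u = 1" "\<rho> \<bullet> u = k"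
    using obtain_rho_direction by blast
  define c\<^sub>0 where "c\<^sub>0 = (\<Sum>\<beta>\<in>\<Delta>. \<omega> \<beta>)"
  have "\<alpha> \<bullet> c\<^sub>0 = 1" if "\<alpha> \<in> \<Delta>" for \<alpha>
    using inner_sum_dual[OF that, of "\<lambda>_. 1"] by (simp add: c\<^sub>0_def)
  then obtain r where "0 < r" and ball_r: "ball c\<^sub>0 r \<subseteq> weyl_chamber \<Delta>"
    using ball_subset_weyl_chamber[OF finite_basis, of c\<^sub>0] by auto
  define R\<^sub>0 where "R\<^sub>0 = norm c\<^sub>0 + r"
  define D where "D = (k + norm \<rho>) * R\<^sub>0"
  define C where "C = exp (- D) * (unit_ball_vol (real DIM('a)) * r ^ DIM('a))"
  show ?thesis
  proof
    show "0 < C" using \<open>0 < r\<close> by (simp add: C_def)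
    fix z :: real
    assume "0 \<le> z"
    define A where "A = {x \<in> weyl_chamber \<Delta>. z \<le> norm x}"
    define v where "v = (z + R\<^sub>0) *\<^sub>R u + c\<^sub>0"
    have pointwise: "ennreal (exp (- k * z - D)) * indicator (ball v r) x
        \<le> ennreal (indicator A x *\<^sub>R exp (- (\<rho> \<bullet> x)))" for x
    proof (cases "x \<in> ball v r")
      case True
      define y where "y = x - (z + R\<^sub>0) *\<^sub>R u"
      have x_eq: "x = (z + R\<^sub>0) *\<^sub>R u + y" by (simp add: y_def)
      have "y \<in> ball c\<^sub>0 r" using True by (simp add: y_def v_def dist_norm algebra_simps)
      hence "y \<in> weyl_chamber \<Delta>" and "norm y \<le> R\<^sub>0"
        using ball_r norm_triangle_sub[of y c\<^sub>0] by (auto simp: R\<^sub>0_def dist_norm norm_minus_commute)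
      have "0 \<le> z + R\<^sub>0" using \<open>0 \<le> z\<close> \<open>0 < r\<close> by (simp add: R\<^sub>0_def)
      have "x \<in> weyl_chamber \<Delta>"
        unfolding x_eq using u(1) \<open>y \<in> weyl_chamber \<Delta>\<close> \<open>0 \<le> z + R\<^sub>0\<close>
        by (intro weyl_chamber_add weyl_chamber_scaleR)
      moreover have "z \<le> norm x"
        using norm_triangle_ineq4[of x y] \<open>norm y \<le> R\<^sub>0\<close> \<open>0 \<le> z + R\<^sub>0\<close> u(2) by (simp add: y_def)
      moreover have "\<rho> \<bullet> x \<le> k * z + D"
      proof -
        have "\<rho> \<bullet> y \<le> norm \<rho> * R\<^sub>0"
          using norm_cauchy_schwarz[of \<rho> y] mult_left_mono[OF \<open>norm y \<le> R\<^sub>0\<close>, of "norm \<rho>"] by simp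
        thus ?thesis unfolding x_eq using u(3) by (simp add: D_def inner_add_right algebra_simps)
      qed
      ultimately show ?thesis using True by (simp add: A_def)
    qed simp
    have "ennreal (C * exp (- k * z))
        = ennreal (exp (- k * z - D) * (unit_ball_vol (real DIM('a)) * r ^ DIM('a)))"
      by (simp add: C_def exp_diff exp_minus field_simps)
    also have "\<dots> = ennreal (exp (- k * z - D)) * emeasure lborel (ball v r)"
      using \<open>0 < r\<close> by (simp add: emeasure_ball ennreal_mult')
    also have "\<dots> = (\<integral>\<^sup>+ x. ennreal (exp (- k * z - D)) * indicator (ball v r) x \<partial>lborel)"
      by (rule nn_integral_cmult_indicator[symmetric]) simp
    also have "\<dots> \<le> (\<integral>\<^sup>+ x. ennreal (indicator A x *\<^sub>R exp (- (\<rho> \<bullet> x))) \<partial>lborel)"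
      by (intro nn_integral_mono pointwise)
    finally show "ennreal (C * exp (- k * z))
        \<le> (\<integral>\<^sup>+ x. ennreal (indicator {x \<in> weyl_chamber \<Delta>. z \<le> norm x} x *\<^sub>R exp (- (\<rho> \<bullet> x))) \<partial>lborel)"
      unfolding A_def .
  qed
qed

lemma tail_integral_bounds:
  "\<exists>C1 C2. C1 > 0 \<and> C2 > 0 \<and>
     (\<forall>z::real. z > 0 \<longrightarrow>
        C1 \<le> (LINT x:{x \<in> weyl_chamber \<Delta>. norm x \<ge> z}|lborel. exp (- (\<rho> \<bullet> x))) / exp (- k * z) \<and>
        (LINT x:{x \<in> weyl_chamber \<Delta>. norm x \<ge> z}|lborel. exp (- (\<rho> \<bullet> x))) / exp (- k * z) \<le> C2)"
proof -
  obtain C1 where "0 < C1" and lower: "\<And>z. 0 \<le> z \<Longrightarrow> ennreal (C1 * exp (- k * z))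
    \<le> (\<integral>\<^sup>+ x. ennreal (indicator {x \<in> weyl_chamber \<Delta>. z \<le> norm x} x *\<^sub>R exp (- (\<rho> \<bullet> x))) \<partial>lborel)"
    using nn_integral_tail_ge by blast
  obtain C2 where "0 < C2" and upper: "\<And>z. (\<integral>\<^sup>+ x. ennreal (indicator {x \<in> weyl_chamber \<Delta>. z \<le> norm x} x *\<^sub>R exp (- (\<rho> \<bullet> x))) \<partial>lborel)
    \<le> ennreal (C2 * exp (- k * z))"
    using nn_integral_tail_le by blast
  have "C1 * exp (- k * z) \<le> (LINT x:{x \<in> weyl_chamber \<Delta>. z \<le> norm x}|lborel. exp (- (\<rho> \<bullet> x)))
      \<and> (LINT x:{x \<in> weyl_chamber \<Delta>. z \<le> norm x}|lborel. exp (- (\<rho> \<bullet> x))) \<le> C2 * exp (- k * z)"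
    if "0 < z" for z
  proof -
    define N where "N = (\<integral>\<^sup>+ x. ennreal (indicator {x \<in> weyl_chamber \<Delta>. z \<le> norm x} x *\<^sub>R exp (- (\<rho> \<bullet> x))) \<partial>lborel)"
    have integral_eq: "(LINT x:{x \<in> weyl_chamber \<Delta>. z \<le> norm x}|lborel. exp (- (\<rho> \<bullet> x))) = enn2real N"
      unfolding set_lebesgue_integral_def N_def by (rule integral_eq_nn_integral) auto
    have N_le: "N \<le> ennreal (C2 * exp (- k * z))" using upper by (simp add: N_def)
    hence "N < \<infinity>" by (simp add: le_less_trans)
    have "C1 * exp (- k * z) = enn2real (ennreal (C1 * exp (- k * z)))"
      using \<open>0 < C1\<close> by simp
    also have "\<dots> \<le> enn2real N"
      using lower[of z] that \<open>N < \<infinity>\<close> by (intro enn2real_mono) (auto simp: N_def)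
    finally have "C1 * exp (- k * z) \<le> enn2real N" .
    moreover have "enn2real N \<le> C2 * exp (- k * z)"
      using N_le \<open>0 < C2\<close> by (intro enn2real_leI) auto
    ultimately show ?thesis by (simp add: integral_eq)
  qed
  thus ?thesis using \<open>0 < C1\<close> \<open>0 < C2\<close> by (auto simp: le_divide_eq divide_le_eq)
qed

end

theorem lemma5p6:
  fixes \<Phi> \<Delta> :: "'a::euclidean_space set"
    and \<omega> :: "'a \<Rightarrow> 'a" and kk :: "'a \<Rightarrow> real" and \<rho> :: 'a and k :: real
  assumes "root_system \<Phi>"
    and "root_base \<Phi> \<Delta>"
    and "\<forall>\<alpha>\<in>\<Delta>. \<forall>\<beta>\<in>\<Delta>. \<alpha> \<bullet> \<omega> \<beta> = (if \<alpha> = \<beta> then 1 else 0)"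
    and "\<rho> = (\<Sum>\<beta>\<in>positive_roots \<Phi> \<Delta>. \<beta>)"
    and "\<rho> = (\<Sum>\<alpha>\<in>\<Delta>. kk \<alpha> *\<^sub>R \<alpha>)"
    and "k = Min ((\<lambda>\<alpha>. kk \<alpha> / norm (\<omega> \<alpha>)) ` \<Delta>)"
  shows "\<exists>C1 C2. C1 > 0 \<and> C2 > 0 \<and>
     (\<forall>z::real. z > 0 \<longrightarrow>
        C1 \<le> (LINT x:{x \<in> weyl_chamber \<Delta>. norm x \<ge> z}|lborel. exp (- (\<rho> \<bullet> x))) / exp (- k * z) \<and>
        (LINT x:{x \<in> weyl_chamber \<Delta>. norm x \<ge> z}|lborel. exp (- (\<rho> \<bullet> x))) / exp (- k * z) \<le> C2)"
proof -
  have "finite \<Phi>" "\<Delta> \<subseteq> \<Phi>" "span \<Delta> = UNIV"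
    using assms(1,2) by (auto simp: root_system_def root_base_def)
  then interpret dual_basis \<Delta> \<omega>
    using assms(3) by unfold_locales (auto intro: finite_subset)
  have "0 < kk \<alpha>" if "\<alpha> \<in> \<Delta>" for \<alpha>
  proof -
    have "kk \<alpha> = \<rho> \<bullet> \<omega> \<alpha>" using that by (simp add: assms(5) sum_inner_dual)
    also have "1 \<le> \<dots>"
      unfolding assms(4) using \<open>finite \<Phi>\<close> \<open>\<Delta> \<subseteq> \<Phi>\<close> that by (rule one_le_inner_sum_positive_roots)
    finally show ?thesis by simp
  qed
  then interpret weyl_integral \<Delta> \<omega> kk \<rho> k
    using assms(5,6) by unfold_locales auto
  show ?thesis by (rule tail_integral_bounds)
qed

end
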